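(* Let $q>2$, let $r\in\mathbb{R}$, and let $a_1,\dots,a_n>0$, $b_1,\dots,b_n>0$. Then $$\left(\sum_{i=1}^n b_i^r\right)^{1-q}\sum_{i=1}^n a_i^r \ln_q\!\left(\frac{a_i^r}{b_i^r}\right)\ \leq\ \left(\sum_{i=1}^n a_i^r\right)\left\{\ln_q\!\left(\sum_{i=1}^n a_i^r\right)-\ln_q\!\left(\sum_{i=1}^n b_i^r\right)\right\}.$$
   Context: For $q\neq 1$ and $x>0$, the $q$-deformed logarithm is $\ln_q(x)=\dfrac{x^{1-q}-1}{1-q}$. *)

theory Defs
  imports Complex_Main
begin

text \<open>q-deformed logarithm, for q \<noteq> 1 and x > 0.\<close>
definition lnq :: "real \<Rightarrow> real \<Rightarrow> real" where
  "lnq q x = (x powr (1 - q) - 1) / (1 - q)"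

end

theory Submission
  imports Defs
begin

text \<open>With \<open>s = 2 - q \<le> 0\<close> one has \<open>x * lnq q (x / y) = (x powr s * y powr (1 - s) - x) / (1 - q)\<close>,
  so after dividing by \<open>1 - q < 0\<close> the inequality becomes the reverse Hoelder inequality
  \<open>(\<Sum> x) powr s * (\<Sum> y) powr (1 - s) \<le> \<Sum> x powr s * y powr (1 - s)\<close>.
  That in turn is the sum of the tangent-line bounds \<open>1 + s * (u - 1) \<le> u powr s\<close> of the
  convex function \<open>u powr s\<close> at \<open>u = (x\<^sub>i / y\<^sub>i) / (\<Sum> x / \<Sum> y)\<close>.\<close>

lemma powr_ge_tangent_line:
  fixes u s :: real
  assumes "u > 0" "s \<le> 0"
  shows "1 + s * (u - 1) \<le> u powr s"
proof -
  have "s * (u - 1) \<le> s * ln u"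
    using assms ln_le_minus_one by (simp add: mult_left_mono_neg)
  also have "1 + s * ln u \<le> exp (s * ln u)" by (rule exp_ge_add_one_self)
  finally show ?thesis using assms by (simp add: powr_def)
qed

lemma powr_mult_powr_ge_tangent:
  fixes x y A B s :: real
  assumes "x > 0" "y > 0" "A > 0" "B > 0" "s \<le> 0"
  shows "A powr s * B powr (-s) * (1 - s) * y + s * A powr (s - 1) * B powr (1 - s) * x
         \<le> x powr s * y powr (1 - s)"
proof -
  define u where "u = (x / y) / (A / B)"
  define c where "c = A powr s * B powr (-s) * y"
  have "u > 0" "c > 0" using assms by (simp_all add: u_def c_def)
  then have "c * (1 + s * (u - 1)) \<le> c * u powr s"
    using powr_ge_tangent_line assms(5) by (simp add: mult_left_mono)
  moreover have "c * u powr s = x powr s * y powr (1 - s)"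
    using assms unfolding u_def c_def
    by (simp add: powr_divide powr_diff powr_minus divide_simps powr_add powr_mult)
  moreover have "c * (1 + s * (u - 1)) =
      A powr s * B powr (-s) * (1 - s) * y + s * A powr (s - 1) * B powr (1 - s) * x"
    using assms unfolding u_def c_def
    by (simp add: powr_diff powr_minus divide_simps) (simp add: algebra_simps)
  ultimately show ?thesis by simp
qed

lemma sum_powr_mult_powr_ge:
  fixes x y :: "'a \<Rightarrow> real" and s :: real
  assumes "finite I" "I \<noteq> {}" "\<And>i. i \<in> I \<Longrightarrow> x i > 0" "\<And>i. i \<in> I \<Longrightarrow> y i > 0" "s \<le> 0"
  shows "(\<Sum>i\<in>I. x i) powr s * (\<Sum>i\<in>I. y i) powr (1 - s) \<le> (\<Sum>i\<in>I. x i powr s * y i powr (1 - s))"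
proof -
  define A where "A = (\<Sum>i\<in>I. x i)"
  define B where "B = (\<Sum>i\<in>I. y i)"
  have A: "A > 0" and B: "B > 0"
    using assms unfolding A_def B_def by (simp_all add: sum_pos)
  have "A powr s * B powr (1 - s) =
      A powr s * B powr (-s) * (1 - s) * B + s * A powr (s - 1) * B powr (1 - s) * A"
    using A B by (simp add: powr_diff powr_minus divide_simps) (simp add: algebra_simps)
  also have "\<dots> = (\<Sum>i\<in>I. A powr s * B powr (-s) * (1 - s) * y i
                         + s * A powr (s - 1) * B powr (1 - s) * x i)"
    by (simp add: sum.distrib A_def B_def flip: sum_distrib_left)
  also have "\<dots> \<le> (\<Sum>i\<in>I. x i powr s * y i powr (1 - s))"
    using assms A B by (intro sum_mono powr_mult_powr_ge_tangent) auto
  finally show ?thesis by (simp add: A_def B_def)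
qed

lemma mult_lnq_divide:
  fixes q x y :: real
  assumes "x > 0" "y > 0"
  shows "x * lnq q (x / y) = (x powr (2 - q) * y powr (q - 1) - x) / (1 - q)"
proof -
  have "x * (x / y) powr (1 - q) = x powr (2 - q) * y powr (q - 1)"
    using assms by (simp add: powr_divide powr_diff powr_minus divide_simps power2_eq_square)
  then show ?thesis unfolding lnq_def by (simp add: field_simps)
qed

lemma sum_mult_lnq_le:
  fixes q :: real and x y :: "'a \<Rightarrow> real"
  assumes "q \<ge> 2" "finite I" "\<And>i. i \<in> I \<Longrightarrow> x i > 0" "\<And>i. i \<in> I \<Longrightarrow> y i > 0"
  shows "(\<Sum>i\<in>I. y i) powr (1 - q) * (\<Sum>i\<in>I. x i * lnq q (x i / y i))
         \<le> (\<Sum>i\<in>I. x i) * (lnq q (\<Sum>i\<in>I. x i) - lnq q (\<Sum>i\<in>I. y i))"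
proof (cases "I = {}")
  case False
  define A where "A = (\<Sum>i\<in>I. x i)"
  define B where "B = (\<Sum>i\<in>I. y i)"
  define S where "S = (\<Sum>i\<in>I. x i powr (2 - q) * y i powr (q - 1))"
  have A: "A > 0" and B: "B > 0"
    using assms False unfolding A_def B_def by (simp_all add: sum_pos)
  have "A powr (2 - q) * B powr (q - 1) \<le> S"
    using sum_powr_mult_powr_ge[OF assms(2) False assms(3,4), where s = "2 - q"] assms(1)
    by (simp add: A_def B_def S_def)
  then have "B powr (1 - q) * (A powr (2 - q) * B powr (q - 1)) \<le> B powr (1 - q) * S"
    by (simp add: mult_left_mono)
  moreover have "B powr (1 - q) * (A powr (2 - q) * B powr (q - 1)) = A * A powr (1 - q)"
  proof -
    have "B powr (1 - q) * B powr (q - 1) = 1" "A powr (2 - q) = A * A powr (1 - q)"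
      using A B by (simp_all add: powr_add [symmetric] powr_diff power2_eq_square)
    then show ?thesis by (simp add: algebra_simps)
  qed
  ultimately have reverse_hoelder: "A * A powr (1 - q) \<le> B powr (1 - q) * S"
    by simp
  have "1 - q < 0" using assms(1) by simp
  have sum_lnq: "(\<Sum>i\<in>I. x i * lnq q (x i / y i)) = (S - A) / (1 - q)"
    using assms(3,4) unfolding S_def A_def
    by (simp add: mult_lnq_divide sum_divide_distrib [symmetric] sum_subtractf)
  have "B powr (1 - q) * ((S - A) / (1 - q)) - A * (lnq q A - lnq q B)
        = (B powr (1 - q) * S - A * A powr (1 - q)) / (1 - q)"
    by (simp add: lnq_def diff_divide_distrib [symmetric] right_diff_distrib)
  also have "\<dots> \<le> 0"
    using reverse_hoelder \<open>1 - q < 0\<close> by (simp add: divide_nonneg_neg)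
  finally show ?thesis by (simp add: sum_lnq A_def B_def)
qed simp

theorem mainTheorem4:
  fixes q r :: real and n :: nat and a b :: "nat \<Rightarrow> real"
  assumes "q > 2"
    and "\<And>i. i \<in> {1..n} \<Longrightarrow> a i > 0"
    and "\<And>i. i \<in> {1..n} \<Longrightarrow> b i > 0"
  shows "(\<Sum>i=1..n. b i powr r) powr (1 - q) * (\<Sum>i=1..n. a i powr r * lnq q (a i powr r / b i powr r))
         \<le> (\<Sum>i=1..n. a i powr r) * (lnq q (\<Sum>i=1..n. a i powr r) - lnq q (\<Sum>i=1..n. b i powr r))"
  using assms by (intro sum_mult_lnq_le) (auto simp: less_imp_neq [symmetric])

end
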